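(* Let $0<k<n$ and $d$ be integers. Then $C_{12}>0$ for every allowable critical data set $A_c=(\alpha_c,n_1,d_1,k_1,n_2,d_2,k_2)$ for type $(n,d,k)$ with $k_1=1$.
   Context: Write $d=na-t$ with integers $a,t$, $0\le t<n$, and $ka=l(n-k)+t+m$ with integers $l,m$, $0\le m<n-k$. A critical data set for type $(n,d,k)$ is a tuple $A_c=(\alpha_c,n_1,d_1,k_1,n_2,d_2,k_2)$ with integers $n_i\ge1$, $k_i\ge0$, $d_i$ such that $n_1+n_2=n$, $d_1+d_2=d$, $k_1+k_2=k$, $\frac{d_2}{n_2}>\frac{d_1}{n_1}$, $\frac{k_1}{n_1}>\frac{k_2}{n_2}$, and $\alpha_c=\frac{d_2n_1-d_1n_2}{n_2k_1-n_1k_2}$. It is allowable if moreover $\frac tk<\alpha_c<\frac{ln+t}{k}$, $d\ge\frac1k(n^2-1)-(n-k)$, $d_1\ge\frac1{k_1}(n_1^2-1)-(n_1-k_1)$, and either ($k_2=0$ and $n_2=1$) or ($k_2\ge1$ and $d_2\ge\frac1{k_2}(n_2^2-1)-(n_2-k_2)$). Define $C_{12}=-n_1n_2-d_2n_1+d_1n_2+k_1(d_2+n_2-k_2)$. *)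

theory Defs
  imports Complex_Main
begin

definition critical_data_set ::
  "int \<Rightarrow> int \<Rightarrow> int \<Rightarrow> real \<Rightarrow> int \<Rightarrow> int \<Rightarrow> int \<Rightarrow> int \<Rightarrow> int \<Rightarrow> int \<Rightarrow> bool" where
  "critical_data_set n d k \<alpha> n1 d1 k1 n2 d2 k2 \<longleftrightarrow>
     n1 \<ge> 1 \<and> n2 \<ge> 1 \<and> k1 \<ge> 0 \<and> k2 \<ge> 0 \<and>
     n1 + n2 = n \<and> d1 + d2 = d \<and> k1 + k2 = k \<and>
     real_of_int d2 / real_of_int n2 > real_of_int d1 / real_of_int n1 \<and>
     real_of_int k1 / real_of_int n1 > real_of_int k2 / real_of_int n2 \<and>
     \<alpha> = real_of_int (d2 * n1 - d1 * n2) / real_of_int (n2 * k1 - n1 * k2)"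

text \<open>Allowability; t and l are the integers attached to the type (n,d,k).\<close>
definition allowable_critical_data_set ::
  "int \<Rightarrow> int \<Rightarrow> int \<Rightarrow> int \<Rightarrow> int \<Rightarrow> real \<Rightarrow> int \<Rightarrow> int \<Rightarrow> int \<Rightarrow> int \<Rightarrow> int \<Rightarrow> int \<Rightarrow> bool" where
  "allowable_critical_data_set n d k t l \<alpha> n1 d1 k1 n2 d2 k2 \<longleftrightarrow>
     critical_data_set n d k \<alpha> n1 d1 k1 n2 d2 k2 \<and>
     real_of_int t / real_of_int k < \<alpha> \<and>
     \<alpha> < real_of_int (l * n + t) / real_of_int k \<and>
     real_of_int d \<ge> real_of_int (n^2 - 1) / real_of_int k - real_of_int (n - k) \<and>
     real_of_int d1 \<ge> real_of_int (n1^2 - 1) / real_of_int k1 - real_of_int (n1 - k1) \<and>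
     ((k2 = 0 \<and> n2 = 1) \<or>
      (k2 \<ge> 1 \<and> real_of_int d2 \<ge> real_of_int (n2^2 - 1) / real_of_int k2 - real_of_int (n2 - k2)))"

definition C12 :: "int \<Rightarrow> int \<Rightarrow> int \<Rightarrow> int \<Rightarrow> int \<Rightarrow> int \<Rightarrow> int" where
  "C12 n1 d1 k1 n2 d2 k2 = - n1 * n2 - d2 * n1 + d1 * n2 + k1 * (d2 + n2 - k2)"

end

theory Submission
  imports Defs
begin

(* Put q = a + l, so that d = (n - k) q + m, and e = d1 - (n1 - 1) q. Clearing denominators,
   the upper bound alpha_c < (l n + t)/k says m (n2 - n1 k2) < k ((n2 - k2) d1 - (n1 - 1) d2),
   and the difference of the two sides is (n - k)(k e - m); hence k e > m >= 0 and e >= 1.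
   With D = n2 - n1 k2 >= 1, which is k1/n1 > k2/n2, the product (n2 - k2) C12 is then a sum
   of nonnegative terms and D^2, where the lower bound on d2 enters with the factor n1 - 1. *)

lemma lower_bound_div_iff_int:
  fixes n d k :: int
  assumes "0 < k"
  shows "real_of_int (n^2 - 1) / real_of_int k - real_of_int (n - k) \<le> real_of_int d
    \<longleftrightarrow> n^2 - 1 \<le> k * (d + n - k)"
proof -
  have "real_of_int (n^2 - 1) / real_of_int k - real_of_int (n - k) \<le> real_of_int d
      \<longleftrightarrow> real_of_int (n^2 - 1) \<le> real_of_int (k * (d + n - k))"
    using assms by (simp add: field_simps)
  then show ?thesis
    by (simp only: of_int_le_iff)
qed

lemma allowable_d2_bound:
  assumes "allowable_critical_data_set n d k t l \<alpha> n1 d1 k1 n2 d2 k2"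
  shows "n2^2 - 1 \<le> k2 * (d2 + n2 - k2)"
  using assms lower_bound_div_iff_int[of k2 n2 d2]
  unfolding allowable_critical_data_set_def by auto

lemma critical_data_set_slope_gap:
  assumes "critical_data_set n d k \<alpha> n1 d1 k1 n2 d2 k2"
  shows "n1 * k2 < n2 * k1"
proof -
  have "real_of_int k2 / real_of_int n2 < real_of_int k1 / real_of_int n1"
    and "n1 \<ge> 1" "n2 \<ge> 1"
    using assms unfolding critical_data_set_def by auto
  then have "real_of_int (n1 * k2) < real_of_int (n2 * k1)"
    by (simp add: field_simps)
  then show ?thesis
    by (simp only: of_int_less_iff)
qed

lemma critical_value_less_upper_bound_iff:
  fixes n d k a t l m n1 d1 k1 n2 d2 k2 :: int and \<alpha> :: real
  assumes "0 < k" and "k < n"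
    and "d = n * a - t" and "k * a = l * (n - k) + t + m"
    and "critical_data_set n d k \<alpha> n1 d1 k1 n2 d2 k2"
  shows "\<alpha> < real_of_int (l * n + t) / real_of_int k
    \<longleftrightarrow> m * (n2 * k1 - n1 * k2) < k * ((n2 - k2) * d1 - (n1 - k1) * d2)"
proof -
  define D where "D = n2 * k1 - n1 * k2"
  define N where "N = d2 * n1 - d1 * n2"
  define E where "E = (n2 - k2) * d1 - (n1 - k1) * d2"
  define s where "s = l * n + t"
  have "D > 0"
    using critical_data_set_slope_gap[OF assms(5)] unfolding D_def by simp
  have \<alpha>: "\<alpha> = real_of_int N / real_of_int D"
    using assms(5) unfolding critical_data_set_def N_def D_def by simp
  have sums: "n = n1 + n2" "d = d1 + d2" "k = k1 + k2"
    using assms(5) unfolding critical_data_set_def by auto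
  have "l * (n - k) = k * a - t - m"
    using assms(4) by simp
  have "(n - k) * s = n * (l * (n - k)) + (n - k) * t"
    unfolding s_def by (simp add: algebra_simps)
  also have "\<dots> = k * d - n * m"
    unfolding \<open>l * (n - k) = k * a - t - m\<close> assms(3) by (simp add: algebra_simps)
  finally have s_eq: "(n - k) * s = k * d - n * m" .
  have N_eq: "(n - k) * N = d * D - n * E"
    unfolding sums D_def N_def E_def by (simp add: algebra_simps)
  have "\<alpha> < real_of_int s / real_of_int k \<longleftrightarrow> real_of_int (k * N) < real_of_int (s * D)"
    using \<open>D > 0\<close> \<open>0 < k\<close> unfolding \<alpha> by (simp add: field_simps)
  also have "\<dots> \<longleftrightarrow> k * N < s * D"
    by (rule of_int_less_iff)
  also have "\<dots> \<longleftrightarrow> (n - k) * (k * N) < (n - k) * (s * D)"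
    using \<open>k < n\<close> by simp
  also have "\<dots> \<longleftrightarrow> k * (d * D - n * E) < (k * d - n * m) * D"
    by (metis N_eq s_eq mult.assoc mult.left_commute)
  also have "\<dots> \<longleftrightarrow> n * (m * D) < n * (k * E)"
    by (simp add: algebra_simps)
  also have "\<dots> \<longleftrightarrow> m * D < k * E"
    using assms(1,2) by simp
  finally show ?thesis
    unfolding s_def D_def E_def .
qed

lemma C12_pos_of_bounds:
  fixes n1 n2 k2 d1 d2 q m e :: int
  assumes "n1 \<ge> 1" and "k2 \<ge> 0" and "n1 * k2 < n2"
    and "0 \<le> m" and "m < (1 + k2) * e"
    and "d1 = e + (n1 - 1) * q" and "d2 = (n2 - k2) * q + m - e"
    and "n2^2 - 1 \<le> k2 * (d2 + n2 - k2)"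
  shows "C12 n1 d1 1 n2 d2 k2 > 0"
proof -
  define D where "D = n2 - n1 * k2"
  have "D \<ge> 1"
    using assms(3) unfolding D_def by simp
  have "(1 + k2) * e > 0"
    using assms(4,5) by linarith
  then have "e \<ge> 1"
    using assms(2) by (simp add: zero_less_mult_iff)
  have "k2 \<le> n1 * k2"
    using assms(1,2) by (simp add: mult_le_cancel_right1)
  then have "n2 - k2 > 0"
    using assms(3) by simp
  have "(n2 - k2) * C12 n1 d1 1 n2 d2 k2
      = n2 * D * (e - 1) + n2 * (n1 - 1) * ((1 + k2) * e - 1 - m)
        + (n1 - 1) * (k2 * (d2 + n2 - k2) - (n2^2 - 1))
        + D^2 + (n1 - 1) * (k2 + 1) * (D - 1) + (n1 - 1) * k2 * (n1 + 1)"
    unfolding C12_def D_def assms(6,7) by (simp add: algebra_simps power2_eq_square)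
  also have "\<dots> > 0"
    using assms \<open>D \<ge> 1\<close> \<open>e \<ge> 1\<close> \<open>n2 - k2 > 0\<close>
    by (intro add_nonneg_pos add_pos_nonneg add_nonneg_nonneg mult_nonneg_nonneg) auto
  finally show ?thesis
    using \<open>n2 - k2 > 0\<close> by (simp add: zero_less_mult_iff)
qed

theorem proposition5p5:
  fixes n d k a t l m n1 d1 k1 n2 d2 k2 :: int and \<alpha> :: real
  assumes "0 < k" and "k < n"
    and "d = n * a - t" and "0 \<le> t" and "t < n"
    and "k * a = l * (n - k) + t + m" and "0 \<le> m" and "m < n - k"
    and "allowable_critical_data_set n d k t l \<alpha> n1 d1 k1 n2 d2 k2"
    and "k1 = 1"
  shows "C12 n1 d1 k1 n2 d2 k2 > 0"
proof -
  have crit: "critical_data_set n d k \<alpha> n1 d1 k1 n2 d2 k2"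
    and "\<alpha> < real_of_int (l * n + t) / real_of_int k"
    using assms(9) unfolding allowable_critical_data_set_def by auto
  then have gap: "m * (n2 - n1 * k2) < k * ((n2 - k2) * d1 - (n1 - 1) * d2)"
    using critical_value_less_upper_bound_iff[OF assms(1-3,6) crit] assms(10) by simp
  have "n1 \<ge> 1" "k2 \<ge> 0" "n = n1 + n2" "d = d1 + d2" "k = 1 + k2"
    using crit assms(10) unfolding critical_data_set_def by auto
  define q where "q = a + l"
  define e where "e = d1 - (n1 - 1) * q"
  have d1: "d1 = e + (n1 - 1) * q"
    unfolding e_def by simp
  have d2: "d2 = (n2 - k2) * q + m - e"
    using assms(3,6) \<open>n = n1 + n2\<close> \<open>d = d1 + d2\<close> \<open>k = 1 + k2\<close>
    unfolding e_def q_def by (simp add: algebra_simps)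
  have "k * ((n2 - k2) * d1 - (n1 - 1) * d2) - m * (n2 - n1 * k2) = (n - k) * (k * e - m)"
    unfolding d1 d2 \<open>n = n1 + n2\<close> \<open>k = 1 + k2\<close> by (simp add: algebra_simps)
  with gap have "(n - k) * (k * e - m) > 0"
    by linarith
  with \<open>k < n\<close> \<open>k = 1 + k2\<close> have "m < (1 + k2) * e"
    by (simp add: zero_less_mult_iff)
  show ?thesis
    using C12_pos_of_bounds[OF \<open>n1 \<ge> 1\<close> \<open>k2 \<ge> 0\<close> _ assms(7) \<open>m < (1 + k2) * e\<close> d1 d2]
      critical_data_set_slope_gap[OF crit] allowable_d2_bound[OF assms(9)] assms(10)
    by simp
qed

end
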